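(* Under Assumptions 1–4 below, and with $\beta\le\frac{1}{\omega+1}$, the iterates of Algorithm 2Direction satisfy, for every $t\ge0$, $$\mathbb E_t\Big[\frac1n\sum_{i=1}^n\|h_i^{t+1}-\nabla f_i(z^{t+1})\|^2\Big]\le8p\Big(1+\frac p\beta\Big)L_{\max}D_f(z^t,y^{t+1})+4p\Big(1+\frac p\beta\Big)\widehat L^2\,\mathbb E_t\|x^{t+1}-y^{t+1}\|^2+\Big(1-\frac\beta2\Big)\frac1n\sum_{i=1}^n\|h_i^t-\nabla f_i(z^t)\|^2,$$ where $D_f(x,y)=f(x)-f(y)-\langle\nabla f(y),x-y\rangle$.
   Context: Setting: $f=\frac1n\sum_{i=1}^nf_i$, $f_i:\mathbb R^d\to\mathbb R$. Assumption 1: each $f_i$ is $L_i$-smooth, $L_{\max}=\max_iL_i$, and $\widehat L>0$ satisfies $\frac1n\sum_i\|\nabla f_i(x)-\nabla f_i(y)\|^2\le\widehat L^2\|x-y\|^2$ for all $x,y$. Assumption 2: $f$ is $L$-smooth. Assumption 3: each $f_i$ is convex and $f$ is $\mu$-strongly convex ($\mu\ge0$) with minimizer $x^*$. Assumption 4: the randomness of all compressors is drawn independently (of each other, of the coins $c^t$, and of the past). Compressor classes: $\mathbb U(\omega)$ ($\omega\ge0$) = stochastic maps $\mathcal C$ with $\mathbb E\mathcal C(x)=x$, $\mathbb E\|\mathcal C(x)-x\|^2\le\omega\|x\|^2$; $\mathbb B(\alpha)$ ($\alpha\in(0,1]$) = possibly stochastic maps with $\mathbb E\|\mathcal C(x)-x\|^2\le(1-\alpha)\|x\|^2$.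 Algorithm 2Direction: compressors $\mathcal C_i^{D,y},\mathcal C_i^{D,z}\in\mathbb U(\omega)$ (workers), $\mathcal C^P\in\mathbb B(\alpha)$ (server); parameters $\bar L>0$, $\mu\ge0$, $p\in(0,1]$, $\Gamma_0\ge1$, $\tau\in(0,1]$, $x^0,h_1^0,\dots,h_n^0,k^0,v^0\in\mathbb R^d$. Set $\beta=1/(\omega+1)$, $w^0=z^0=u^0=x^0$, $h^0=\frac1n\sum_ih_i^0$, $\theta_{\min}=\frac14\min\{1,\alpha/p,\tau/p,\beta/p\}$. For $t=0,1,\dots$: let $\bar\theta_{t+1}$ be the largest root of $p\bar L\Gamma_t\theta^2+p(\bar L+\Gamma_t\mu)\theta-(\bar L+\Gamma_t\mu)=0$, $\theta_{t+1}=\min\{\bar\theta_{t+1},\theta_{\min}\}$, $\gamma_{t+1}=p\theta_{t+1}\Gamma_t/(1-p\theta_{t+1})$, $\Gamma_{t+1}=\Gamma_t+\gamma_{t+1}$; $y^{t+1}=\theta_{t+1}w^t+(1-\theta_{t+1})z^t$; $m_i^{t,y}=\mathcal C_i^{D,y}(\nabla f_i(y^{t+1})-h_i^t)$; $g^{t+1}=h^t+\frac1n\sum_im_i^{t,y}$; $u^{t+1}=\arg\min_x\{\langle g^{t+1},x\rangle+\frac{\bar L+\Gamma_t\mu}{2\gamma_{t+1}}\|x-u^t\|^2+\frac\mu2\|x-y^{t+1}\|^2\}$; $q^{t+1}=\arg\min_x\{\langle k^t,x\rangle+\frac{\bar L+\Gamma_t\mu}{2\gamma_{t+1}}\|x-w^t\|^2+\frac\mu2\|x-y^{t+1}\|^2\}$;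 $w^{t+1}=q^{t+1}+\mathcal C^P(u^{t+1}-q^{t+1})$; $x^{t+1}=\theta_{t+1}u^{t+1}+(1-\theta_{t+1})z^t$; draw $c^t\sim\mathrm{Bernoulli}(p)$, and set $(k^{t+1},z^{t+1})=(v^t,x^{t+1})$ if $c^t=1$, $(k^{t+1},z^{t+1})=(k^t,z^t)$ if $c^t=0$; $m_i^{t,z}=\mathcal C_i^{D,z}(\nabla f_i(z^{t+1})-h_i^t)$; $h_i^{t+1}=h_i^t+\beta m_i^{t,z}$; $v^{t+1}=(1-\tau)v^t+\tau(h^t+\frac1n\sum_im_i^{t,z})$; $h^{t+1}=h^t+\frac\beta n\sum_im_i^{t,z}$. $\mathbb E_t$ denotes conditional expectation given the randomness of the first $t$ iterations. *)

theory Defs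
  imports "HOL-Probability.Probability"
begin

text \<open>A stochastic map on 'a is modelled as a jointly measurable map C :: 'r => 'a => 'a
  together with the probability law Q of its random seed r; C(x) means C r x with r ~ Q.\<close>

definition unbiased_compressor ::
  "'r measure \<Rightarrow> ('r \<Rightarrow> 'a::euclidean_space \<Rightarrow> 'a) \<Rightarrow> real \<Rightarrow> bool" where
  "unbiased_compressor Q C \<omega> \<longleftrightarrow>
     \<omega> \<ge> 0 \<and> prob_space Q \<and>
     (\<lambda>(r, x). C r x) \<in> borel_measurable (Q \<Otimes>\<^sub>M borel) \<and>
     (\<forall>x. integrable Q (\<lambda>r. C r x) \<and> (\<integral>r. C r x \<partial>Q) = x \<and>
          integrable Q (\<lambda>r. (norm (C r x - x))\<^sup>2) \<and>
          (\<integral>r. (norm (C r x - x))\<^sup>2 \<partial>Q) \<le> \<omega> * (norm x)\<^sup>2)"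

definition contractive_compressor ::
  "'r measure \<Rightarrow> ('r \<Rightarrow> 'a::euclidean_space \<Rightarrow> 'a) \<Rightarrow> real \<Rightarrow> bool" where
  "contractive_compressor Q C \<alpha> \<longleftrightarrow>
     0 < \<alpha> \<and> \<alpha> \<le> 1 \<and> prob_space Q \<and>
     (\<lambda>(r, x). C r x) \<in> borel_measurable (Q \<Otimes>\<^sub>M borel) \<and>
     (\<forall>x. integrable Q (\<lambda>r. (norm (C r x - x))\<^sup>2) \<and>
          (\<integral>r. (norm (C r x - x))\<^sup>2 \<partial>Q) \<le> (1 - \<alpha>) * (norm x)\<^sup>2)"

definition avg_fun :: "nat \<Rightarrow> (nat \<Rightarrow> 'a \<Rightarrow> 'b::real_vector) \<Rightarrow> 'a \<Rightarrow> 'b" where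
  "avg_fun n g x = (1 / real n) *\<^sub>R (\<Sum>i<n. g i x)"

definition strongly_convex :: "real \<Rightarrow> ('a::real_inner \<Rightarrow> real) \<Rightarrow> bool" where
  "strongly_convex \<mu> F \<longleftrightarrow> convex_on UNIV (\<lambda>x. F x - \<mu> / 2 * (norm x)\<^sup>2)"

definition bregman :: "('a::real_inner \<Rightarrow> real) \<Rightarrow> ('a \<Rightarrow> 'a) \<Rightarrow> 'a \<Rightarrow> 'a \<Rightarrow> real" where
  "bregman F gF x y = F x - F y - gF y \<bullet> (x - y)"

record 'a alg_state =
  Gam :: real
  wv :: 'a
  zv :: 'a
  uv :: 'a
  kv :: 'a
  vv :: 'a
  hv :: "nat \<Rightarrow> 'a"
  hbar :: 'a

text \<open>Randomness of one iteration: seeds of the worker compressors C_i^{D,y} (i<n),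
  seed of the server compressor C^P, the coin c^t, seeds of C_i^{D,z} (i<n).\<close>
type_synonym 'r seeds = "(nat \<Rightarrow> 'r) \<times> 'r \<times> bool \<times> (nat \<Rightarrow> 'r)"

definition step_measure ::
  "nat \<Rightarrow> (nat \<Rightarrow> 'r measure) \<Rightarrow> 'r measure \<Rightarrow> real \<Rightarrow> (nat \<Rightarrow> 'r measure) \<Rightarrow> 'r seeds measure" where
  "step_measure n Qy QP p Qz =
     PiM {..<n} Qy \<Otimes>\<^sub>M QP \<Otimes>\<^sub>M measure_pmf (bernoulli_pmf p) \<Otimes>\<^sub>M PiM {..<n} Qz"

definition theta_min :: "real \<Rightarrow> real \<Rightarrow> real \<Rightarrow> real \<Rightarrow> real" where
  "theta_min \<alpha> \<tau> \<beta> p = 1/4 * min 1 (min (\<alpha>/p) (min (\<tau>/p) (\<beta>/p)))"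

definition theta_next :: "real \<Rightarrow> real \<Rightarrow> real \<Rightarrow> real \<Rightarrow> real \<Rightarrow> real" where
  "theta_next Lb \<mu> p \<Gamma> thmin =
     min (GREATEST \<theta>::real. p * Lb * \<Gamma> * \<theta>\<^sup>2 + p * (Lb + \<Gamma> * \<mu>) * \<theta> - (Lb + \<Gamma> * \<mu>) = 0) thmin"

text \<open>y^{t+1}, which is determined by the state at time t.\<close>
definition y_next :: "real \<Rightarrow> real \<Rightarrow> real \<Rightarrow> real \<Rightarrow> real \<Rightarrow> real \<Rightarrow> 'a::euclidean_space alg_state \<Rightarrow> 'a" where
  "y_next Lb \<mu> p \<tau> \<beta> \<alpha> s =
     (let \<theta> = theta_next Lb \<mu> p (Gam s) (theta_min \<alpha> \<tau> \<beta> p)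
      in \<theta> *\<^sub>R wv s + (1 - \<theta>) *\<^sub>R zv s)"

text \<open>One iteration. Returns (state at t+1, x^{t+1}, y^{t+1}).\<close>
definition alg_step ::
  "nat \<Rightarrow> (nat \<Rightarrow> 'a::euclidean_space \<Rightarrow> 'a) \<Rightarrow>
   (nat \<Rightarrow> 'r \<Rightarrow> 'a \<Rightarrow> 'a) \<Rightarrow> (nat \<Rightarrow> 'r \<Rightarrow> 'a \<Rightarrow> 'a) \<Rightarrow> ('r \<Rightarrow> 'a \<Rightarrow> 'a) \<Rightarrow>
   real \<Rightarrow> real \<Rightarrow> real \<Rightarrow> real \<Rightarrow> real \<Rightarrow> real \<Rightarrow>
   'a alg_state \<Rightarrow> 'r seeds \<Rightarrow> 'a alg_state \<times> 'a \<times> 'a" where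
  "alg_step n gf CDy CDz CP Lb \<mu> p \<tau> \<beta> \<alpha> s \<xi> =
    (case \<xi> of (ry, rP, c, rz) \<Rightarrow>
     let \<Gamma> = Gam s;
         \<theta> = theta_next Lb \<mu> p \<Gamma> (theta_min \<alpha> \<tau> \<beta> p);
         \<gamma> = p * \<theta> * \<Gamma> / (1 - p * \<theta>);
         y = y_next Lb \<mu> p \<tau> \<beta> \<alpha> s;
         g = hbar s + (1 / real n) *\<^sub>R (\<Sum>i<n. CDy i (ry i) (gf i y - hv s i));
         u' = (ARG_MIN (\<lambda>x. g \<bullet> x + (Lb + \<Gamma> * \<mu>) / (2 * \<gamma>) * (norm (x - uv s))\<^sup>2
                              + \<mu> / 2 * (norm (x - y))\<^sup>2) x. True);
         q = (ARG_MIN (\<lambda>x. kv s \<bullet> x + (Lb + \<Gamma> * \<mu>) / (2 * \<gamma>) * (norm (x - wv s))\<^sup>2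
                              + \<mu> / 2 * (norm (x - y))\<^sup>2) x. True);
         w' = q + CP rP (u' - q);
         x' = \<theta> *\<^sub>R u' + (1 - \<theta>) *\<^sub>R zv s;
         k' = (if c then vv s else kv s);
         z' = (if c then x' else zv s);
         mz = (\<lambda>i. CDz i (rz i) (gf i z' - hv s i));
         h' = (\<lambda>i. hv s i + \<beta> *\<^sub>R mz i);
         v' = (1 - \<tau>) *\<^sub>R vv s + \<tau> *\<^sub>R (hbar s + (1 / real n) *\<^sub>R (\<Sum>i<n. mz i));
         hb' = hbar s + (\<beta> / real n) *\<^sub>R (\<Sum>i<n. mz i)
     in (\<lparr>Gam = \<Gamma> + \<gamma>, wv = w', zv = z', uv = u', kv = k', vv = v', hv = h', hbar = hb'\<rparr>,
         x', y))"

definition alg_init :: "nat \<Rightarrow> real \<Rightarrow> 'a::euclidean_space \<Rightarrow> (nat \<Rightarrow> 'a) \<Rightarrow> 'a \<Rightarrow> 'a \<Rightarrow> 'a alg_state" where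
  "alg_init n \<Gamma>0 x0 h0 k0 v0 =
     \<lparr>Gam = \<Gamma>0, wv = x0, zv = x0, uv = x0, kv = k0, vv = v0, hv = h0,
      hbar = (1 / real n) *\<^sub>R (\<Sum>i<n. h0 i)\<rparr>"

primrec alg_run ::
  "nat \<Rightarrow> (nat \<Rightarrow> 'a::euclidean_space \<Rightarrow> 'a) \<Rightarrow>
   (nat \<Rightarrow> 'r \<Rightarrow> 'a \<Rightarrow> 'a) \<Rightarrow> (nat \<Rightarrow> 'r \<Rightarrow> 'a \<Rightarrow> 'a) \<Rightarrow> ('r \<Rightarrow> 'a \<Rightarrow> 'a) \<Rightarrow>
   real \<Rightarrow> real \<Rightarrow> real \<Rightarrow> real \<Rightarrow> real \<Rightarrow> real \<Rightarrow>
   'a alg_state \<Rightarrow> (nat \<Rightarrow> 'r seeds) \<Rightarrow> nat \<Rightarrow> 'a alg_state" where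
  "alg_run n gf CDy CDz CP Lb \<mu> p \<tau> \<beta> \<alpha> s0 \<Xi> 0 = s0"
| "alg_run n gf CDy CDz CP Lb \<mu> p \<tau> \<beta> \<alpha> s0 \<Xi> (Suc t) =
     fst (alg_step n gf CDy CDz CP Lb \<mu> p \<tau> \<beta> \<alpha> (alg_run n gf CDy CDz CP Lb \<mu> p \<tau> \<beta> \<alpha> s0 \<Xi> t) (\<Xi> t))"

end

theory Submission
  imports Defs
begin

text \<open>Conditionally on the seeds of the compressors C_i^{D,y}, the point x^{t+1} is fixed, and
  z^{t+1} equals x^{t+1} with probability p and z^t otherwise. With \<beta> \<le> 1/(\<omega>+1) the map
  \<beta> C_i^{D,z} is a contractive compressor with parameter \<beta>, so in expectation the new shift
  error is at most (1 - \<beta>) times the error of the old shifts h_i^t against the gradients at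
  z^{t+1}. Young's inequality with weight \<beta>/(2p) splits the error at x^{t+1} into the error at
  z^t and the gradient differences between z^t and x^{t+1}, which are routed through y^{t+1}:
  co-coercivity of the convex L_i-smooth f_i bounds the part between z^t and y^{t+1} by the
  Bregman divergence, and the assumption defining Lhat bounds the part between y^{t+1} and
  x^{t+1}.\<close>

section \<open>Smooth convex functions\<close>

lemma has_real_derivative_along_line:
  fixes F :: "'a::real_inner \<Rightarrow> real"
  assumes "\<And>x. (F has_derivative (\<lambda>h. G x \<bullet> h)) (at x)"
  shows "((\<lambda>t. F (y + t *\<^sub>R d)) has_real_derivative (G (y + t *\<^sub>R d) \<bullet> d)) (at t)"
proof -
  have "((\<lambda>t. y + t *\<^sub>R d) has_derivative (\<lambda>h. h *\<^sub>R d)) (at t)"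
    by (auto intro!: derivative_eq_intros)
  from has_derivative_compose[OF this assms]
  have "((\<lambda>t. F (y + t *\<^sub>R d)) has_derivative (\<lambda>h. G (y + t *\<^sub>R d) \<bullet> (h *\<^sub>R d))) (at t)" .
  moreover have "(\<lambda>h. G (y + t *\<^sub>R d) \<bullet> (h *\<^sub>R d)) = (*) (G (y + t *\<^sub>R d) \<bullet> d)"
    by (auto simp: fun_eq_iff)
  ultimately show ?thesis unfolding has_field_derivative_def by simp
qed

lemma convex_on_gradient_inequality:
  fixes F :: "'a::real_inner \<Rightarrow> real"
  assumes cvx: "convex_on UNIV F" and der: "\<And>x. (F has_derivative (\<lambda>h. G x \<bullet> h)) (at x)"
  shows "F y + G y \<bullet> (w - y) \<le> F w"
proof -
  define \<psi> where "\<psi> t = F (y + t *\<^sub>R (w - y))" for t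
  have "convex_on UNIV \<psi>"
  proof (rule convex_onI)
    fix u a b :: real assume "u > 0" "u < 1"
    moreover have "y + ((1 - u) *\<^sub>R a + u *\<^sub>R b) *\<^sub>R (w - y)
        = (1 - u) *\<^sub>R (y + a *\<^sub>R (w - y)) + u *\<^sub>R (y + b *\<^sub>R (w - y))"
      by (simp add: algebra_simps)
    ultimately show "\<psi> ((1 - u) *\<^sub>R a + u *\<^sub>R b) \<le> (1 - u) * \<psi> a + u * \<psi> b"
      unfolding \<psi>_def using convex_onD[OF cvx] by simp
  qed simp
  moreover have "(\<psi> has_real_derivative (G y \<bullet> (w - y))) (at 0)"
    unfolding \<psi>_def using has_real_derivative_along_line[OF der, of y "w - y" 0] by simp
  ultimately have "\<psi> 1 - \<psi> 0 \<ge> G y \<bullet> (w - y) * (1 - 0)"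
    by (intro convex_on_imp_above_tangent[where A = UNIV]) auto
  then show ?thesis unfolding \<psi>_def by simp
qed

lemma bregman_nonneg:
  assumes "convex_on UNIV F" "\<And>x. (F has_derivative (\<lambda>h. G x \<bullet> h)) (at x)"
  shows "0 \<le> bregman F G x y"
  using convex_on_gradient_inequality[OF assms, of y x] unfolding bregman_def by simp

lemma lipschitz_gradient_upper_bound:
  fixes F :: "'a::real_inner \<Rightarrow> real"
  assumes der: "\<And>x. (F has_derivative (\<lambda>h. G x \<bullet> h)) (at x)"
    and lip: "\<And>x y. norm (G x - G y) \<le> K * norm (x - y)"
  shows "F y \<le> F x + G x \<bullet> (y - x) + K / 2 * (norm (y - x))\<^sup>2"
proof -
  define d where "d = y - x"
  define \<phi> where "\<phi> t = F (x + t *\<^sub>R d) - t * (G x \<bullet> d) - K / 2 * t\<^sup>2 * (norm d)\<^sup>2" for t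
  have "\<phi> 1 \<le> \<phi> 0"
  proof (rule DERIV_nonpos_imp_nonincreasing[of 0 1 \<phi>])
    fix t :: real assume t: "0 \<le> t" "t \<le> 1"
    have "(\<phi> has_real_derivative (G (x + t *\<^sub>R d) \<bullet> d - G x \<bullet> d - K / 2 * (2 * t) * (norm d)\<^sup>2)) (at t)"
      unfolding \<phi>_def by (rule has_real_derivative_along_line[OF der] derivative_eq_intros refl | simp)+
    moreover have "G (x + t *\<^sub>R d) \<bullet> d - G x \<bullet> d \<le> K * t * (norm d)\<^sup>2"
    proof -
      have "G (x + t *\<^sub>R d) \<bullet> d - G x \<bullet> d \<le> norm (G (x + t *\<^sub>R d) - G x) * norm d"
        by (metis inner_diff_left norm_cauchy_schwarz)
      also have "\<dots> \<le> (K * norm (t *\<^sub>R d)) * norm d"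
        using lip[of "x + t *\<^sub>R d" x] by (intro mult_right_mono) auto
      finally show ?thesis using t by (simp add: power2_eq_square)
    qed
    ultimately show "\<exists>y. (\<phi> has_real_derivative y) (at t) \<and> y \<le> 0" by force
  qed simp
  then show ?thesis unfolding \<phi>_def d_def by simp
qed

text \<open>Co-coercivity: evaluate F at x - (G x - G y)/K, bounded above via the point x and
  below via the gradient inequality at y.\<close>
lemma norm_gradient_diff_sq_le_bregman:
  fixes F :: "'a::real_inner \<Rightarrow> real"
  assumes cvx: "convex_on UNIV F" and der: "\<And>x. (F has_derivative (\<lambda>h. G x \<bullet> h)) (at x)"
    and lip: "\<And>x y. norm (G x - G y) \<le> K * norm (x - y)" and K: "K \<ge> 0"
  shows "(norm (G x - G y))\<^sup>2 \<le> 2 * K * bregman F G x y"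
proof (cases "K = 0")
  case True
  then show ?thesis using lip[of x y] by simp
next
  case False
  with K have K: "K > 0" by simp
  define v where "v = G x - G y"
  define w where "w = x - (1 / K) *\<^sub>R v"
  have "F y + G y \<bullet> (w - y) \<le> F w" by (rule convex_on_gradient_inequality[OF cvx der])
  also have "F w \<le> F x + G x \<bullet> (w - x) + K / 2 * (norm (w - x))\<^sup>2"
    by (rule lipschitz_gradient_upper_bound[OF der lip])
  finally have "F y + G y \<bullet> (x - y) - (1 / K) * (G y \<bullet> v)
      \<le> F x - (1 / K) * (G x \<bullet> v) + K / 2 * (1 / K)\<^sup>2 * (v \<bullet> v)"
    unfolding w_def
    by (simp add: power_divide algebra_simps flip: power2_norm_eq_inner)
  then have "(1 / K) * (G x \<bullet> v - G y \<bullet> v) - K / 2 * (1 / K)\<^sup>2 * (v \<bullet> v)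
      \<le> F x - F y - G y \<bullet> (x - y)"
    by (simp add: algebra_simps)
  moreover have "G x \<bullet> v - G y \<bullet> v = v \<bullet> v"
    unfolding v_def by (simp add: inner_diff_left inner_commute)
  ultimately have "(1 / (2 * K)) * (v \<bullet> v) \<le> F x - F y - G y \<bullet> (x - y)"
    using K by (simp add: power2_eq_square field_simps)
  then have "v \<bullet> v \<le> 2 * K * (F x - F y - G y \<bullet> (x - y))"
    using K by (simp add: field_simps)
  then show ?thesis unfolding v_def bregman_def by (simp add: power2_norm_eq_inner)
qed

lemma bregman_avg_fun:
  "bregman (avg_fun n F) (avg_fun n G) x y = (1 / real n) * (\<Sum>i<n. bregman (F i) (G i) x y)"
  unfolding bregman_def avg_fun_def
  by (simp add: inner_sum_left sum_subtractf right_diff_distrib)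

lemma lipschitz_const_nonneg:
  fixes g :: "'a::euclidean_space \<Rightarrow> 'b::real_normed_vector"
  assumes "\<And>x y. norm (g x - g y) \<le> K * norm (x - y)"
  shows "0 \<le> K"
proof -
  obtain b :: 'a where "b \<in> Basis" using nonempty_Basis by blast
  then have "norm (g b - g 0) \<le> K" using assms[of b 0] by simp
  then show ?thesis using norm_ge_zero order_trans by blast
qed

section \<open>Averaged squared errors\<close>

definition mean_sq_norm :: "nat \<Rightarrow> (nat \<Rightarrow> 'a::real_normed_vector) \<Rightarrow> real" where
  "mean_sq_norm n v = (1 / real n) * (\<Sum>i<n. (norm (v i))\<^sup>2)"

lemma mean_sq_norm_nonneg: "0 \<le> mean_sq_norm n v"
  unfolding mean_sq_norm_def by (simp add: sum_nonneg)

lemma mean_sq_norm_minus_commute: "mean_sq_norm n (\<lambda>i. a i - b i) = mean_sq_norm n (\<lambda>i. b i - a i)"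
  unfolding mean_sq_norm_def by (simp add: norm_minus_commute)

lemma norm_add_sq_le:
  fixes a b :: "'a::real_normed_vector"
  assumes e: "e > 0"
  shows "(norm (a + b))\<^sup>2 \<le> (1 + e) * (norm a)\<^sup>2 + (1 + 1 / e) * (norm b)\<^sup>2"
proof -
  have "(norm (a + b))\<^sup>2 \<le> (norm a + norm b)\<^sup>2"
    by (simp add: norm_triangle_ineq power_mono)
  also have "\<dots> = (1 + e) * (norm a)\<^sup>2 + (1 + 1 / e) * (norm b)\<^sup>2 - (e * norm a - norm b)\<^sup>2 / e"
    using e by (simp add: power2_eq_square field_simps)
  also have "\<dots> \<le> (1 + e) * (norm a)\<^sup>2 + (1 + 1 / e) * (norm b)\<^sup>2"
    using e by simp
  finally show ?thesis .
qed

lemma mean_sq_norm_add_le: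
  assumes "e > 0"
  shows "mean_sq_norm n (\<lambda>i. a i + b i) \<le> (1 + e) * mean_sq_norm n a + (1 + 1 / e) * mean_sq_norm n b"
proof -
  have "(\<Sum>i<n. (norm (a i + b i))\<^sup>2) \<le> (\<Sum>i<n. (1 + e) * (norm (a i))\<^sup>2 + (1 + 1 / e) * (norm (b i))\<^sup>2)"
    using norm_add_sq_le[OF assms] by (intro sum_mono)
  also have "\<dots> = (1 + e) * (\<Sum>i<n. (norm (a i))\<^sup>2) + (1 + 1 / e) * (\<Sum>i<n. (norm (b i))\<^sup>2)"
    by (simp add: sum.distrib sum_distrib_left)
  finally have "(\<Sum>i<n. (norm (a i + b i))\<^sup>2) / real n
      \<le> ((1 + e) * (\<Sum>i<n. (norm (a i))\<^sup>2) + (1 + 1 / e) * (\<Sum>i<n. (norm (b i))\<^sup>2)) / real n"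
    by (rule divide_right_mono) simp
  then show ?thesis
    unfolding mean_sq_norm_def by (simp add: add_divide_distrib)
qed

lemma mean_sq_norm_gradient_diff_le:
  fixes f :: "nat \<Rightarrow> 'a::euclidean_space \<Rightarrow> real" and gf :: "nat \<Rightarrow> 'a \<Rightarrow> 'a"
  assumes grad: "\<And>i x. i < n \<Longrightarrow> (f i has_derivative (\<lambda>h. gf i x \<bullet> h)) (at x)"
    and smooth_i: "\<And>i x y. i < n \<Longrightarrow> norm (gf i x - gf i y) \<le> Li i * norm (x - y)"
    and Lhat: "\<And>x y. (1 / real n) * (\<Sum>i<n. (norm (gf i x - gf i y))\<^sup>2) \<le> Lhat\<^sup>2 * (norm (x - y))\<^sup>2"
    and convex_i: "\<And>i. i < n \<Longrightarrow> convex_on UNIV (f i)"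
  shows "mean_sq_norm n (\<lambda>i. gf i z - gf i x)
    \<le> 4 * Max (Li ` {..<n}) * bregman (avg_fun n f) (avg_fun n gf) z y + 2 * Lhat\<^sup>2 * (norm (x - y))\<^sup>2"
proof -
  define Lmax where "Lmax = Max (Li ` {..<n})"
  have "(norm (gf i z - gf i y))\<^sup>2 \<le> 2 * Lmax * bregman (f i) (gf i) z y" if i: "i < n" for i
  proof -
    have "(norm (gf i z - gf i y))\<^sup>2 \<le> 2 * Li i * bregman (f i) (gf i) z y"
      using smooth_i[OF i] lipschitz_const_nonneg[OF smooth_i[OF i]]
      by (intro norm_gradient_diff_sq_le_bregman[OF convex_i[OF i] grad[OF i]])
    also have "\<dots> \<le> 2 * Lmax * bregman (f i) (gf i) z y"
      unfolding Lmax_def using i bregman_nonneg[OF convex_i[OF i] grad[OF i]]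
      by (intro mult_right_mono) auto
    finally show ?thesis .
  qed
  then have "(\<Sum>i<n. (norm (gf i z - gf i y))\<^sup>2) \<le> 2 * Lmax * (\<Sum>i<n. bregman (f i) (gf i) z y)"
    by (auto simp: sum_distrib_left intro!: sum_mono)
  then have "mean_sq_norm n (\<lambda>i. gf i z - gf i y) \<le> 2 * Lmax * bregman (avg_fun n f) (avg_fun n gf) z y"
    unfolding mean_sq_norm_def bregman_avg_fun by (simp add: divide_right_mono)
  moreover have "mean_sq_norm n (\<lambda>i. gf i y - gf i x) \<le> Lhat\<^sup>2 * (norm (x - y))\<^sup>2"
    using Lhat[of y x] unfolding mean_sq_norm_def by (simp add: norm_minus_commute)
  moreover have "mean_sq_norm n (\<lambda>i. gf i z - gf i x)
      \<le> 2 * mean_sq_norm n (\<lambda>i. gf i z - gf i y) + 2 * mean_sq_norm n (\<lambda>i. gf i y - gf i x)"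
    using mean_sq_norm_add_le[of 1 n "\<lambda>i. gf i z - gf i y" "\<lambda>i. gf i y - gf i x"] by simp
  ultimately show ?thesis unfolding Lmax_def by linarith
qed

text \<open>The Young weight \<beta>/(2p) is chosen so that (1 - \<beta>)(1 + \<beta>/2) \<le> 1 - \<beta>/2.\<close>
lemma damped_mixture_le:
  fixes \<beta> p Az Ax T :: real
  assumes b: "0 < \<beta>" "\<beta> \<le> 1" and p: "0 < p" "p \<le> 1" and Az: "0 \<le> Az" and T: "0 \<le> T"
    and Ax: "Ax \<le> (1 + \<beta> / (2 * p)) * Az + (1 + 2 * p / \<beta>) * T"
  shows "(1 - \<beta>) * ((1 - p) * Az + p * Ax) \<le> (1 - \<beta> / 2) * Az + 2 * p * (1 + p / \<beta>) * T"
proof -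
  have "(1 - \<beta>) * ((1 - p) * Az + p * Ax)
      \<le> (1 - \<beta>) * ((1 - p) * Az + p * ((1 + \<beta> / (2 * p)) * Az + (1 + 2 * p / \<beta>) * T))"
    using Ax b p by (intro mult_left_mono add_left_mono) auto
  also have "\<dots> = ((1 - \<beta>) * (1 + \<beta> / 2)) * Az + ((1 - \<beta>) * p * (1 + 2 * p / \<beta>)) * T"
    using b p by (simp add: field_simps)
  also have "\<dots> \<le> (1 - \<beta> / 2) * Az + (1 * p * (2 + 2 * p / \<beta>)) * T"
  proof (intro add_mono mult_right_mono Az T)
    show "(1 - \<beta>) * (1 + \<beta> / 2) \<le> 1 - \<beta> / 2" using b by (simp add: algebra_simps)
    show "(1 - \<beta>) * p * (1 + 2 * p / \<beta>) \<le> 1 * p * (2 + 2 * p / \<beta>)"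
      using b p by (intro mult_mono) auto
  qed
  finally show ?thesis by (simp add: algebra_simps)
qed

lemma shift_error_mixture_le:
  fixes f :: "nat \<Rightarrow> 'a::euclidean_space \<Rightarrow> real" and gf :: "nat \<Rightarrow> 'a \<Rightarrow> 'a" and h :: "nat \<Rightarrow> 'a"
  assumes grad: "\<And>i x. i < n \<Longrightarrow> (f i has_derivative (\<lambda>h. gf i x \<bullet> h)) (at x)"
    and smooth_i: "\<And>i x y. i < n \<Longrightarrow> norm (gf i x - gf i y) \<le> Li i * norm (x - y)"
    and Lhat: "\<And>x y. (1 / real n) * (\<Sum>i<n. (norm (gf i x - gf i y))\<^sup>2) \<le> Lhat\<^sup>2 * (norm (x - y))\<^sup>2"
    and convex_i: "\<And>i. i < n \<Longrightarrow> convex_on UNIV (f i)"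
    and b: "0 < \<beta>" "\<beta> \<le> 1" and p: "0 < p" "p \<le> 1"
  shows "(1 - \<beta>) * ((1 - p) * mean_sq_norm n (\<lambda>i. h i - gf i z) + p * mean_sq_norm n (\<lambda>i. h i - gf i x))
    \<le> 8 * p * (1 + p / \<beta>) * Max (Li ` {..<n}) * bregman (avg_fun n f) (avg_fun n gf) z y
      + 4 * p * (1 + p / \<beta>) * Lhat\<^sup>2 * (norm (x - y))\<^sup>2
      + (1 - \<beta> / 2) * mean_sq_norm n (\<lambda>i. h i - gf i z)"
proof -
  define T where "T = 4 * Max (Li ` {..<n}) * bregman (avg_fun n f) (avg_fun n gf) z y
    + 2 * Lhat\<^sup>2 * (norm (x - y))\<^sup>2"
  have grad_diff: "mean_sq_norm n (\<lambda>i. gf i z - gf i x) \<le> T"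
    unfolding T_def by (rule mean_sq_norm_gradient_diff_le[OF grad smooth_i Lhat convex_i])
  have "mean_sq_norm n (\<lambda>i. h i - gf i x)
      \<le> (1 + \<beta> / (2 * p)) * mean_sq_norm n (\<lambda>i. h i - gf i z)
        + (1 + 2 * p / \<beta>) * mean_sq_norm n (\<lambda>i. gf i z - gf i x)"
    using mean_sq_norm_add_le[of "\<beta> / (2 * p)" n "\<lambda>i. h i - gf i z" "\<lambda>i. gf i z - gf i x"] b p
    by simp
  also have "\<dots> \<le> (1 + \<beta> / (2 * p)) * mean_sq_norm n (\<lambda>i. h i - gf i z) + (1 + 2 * p / \<beta>) * T"
    using grad_diff b p by (intro add_left_mono mult_left_mono) auto
  finally have "(1 - \<beta>) * ((1 - p) * mean_sq_norm n (\<lambda>i. h i - gf i z) + p * mean_sq_norm n (\<lambda>i. h i - gf i x))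
      \<le> (1 - \<beta> / 2) * mean_sq_norm n (\<lambda>i. h i - gf i z) + 2 * p * (1 + p / \<beta>) * T"
    using b p mean_sq_norm_nonneg grad_diff by (intro damped_mixture_le) (auto intro: order_trans)
  then show ?thesis unfolding T_def by (simp add: algebra_simps)
qed

section \<open>Step sizes and the proximal step\<close>

lemma Greatest_quadratic_root_pos:
  fixes a B b :: real
  assumes a: "a > 0" and B: "B > 0" and b: "b > 0"
  shows "(GREATEST \<theta>::real. a * \<theta>\<^sup>2 + B * \<theta> - b = 0) > 0"
proof -
  define s where "s = sqrt (B\<^sup>2 + 4 * a * b)"
  define r where "r = (s - B) / (2 * a)"
  have s2: "s\<^sup>2 = B\<^sup>2 + 4 * a * b" unfolding s_def using a b B by simp
  have "sqrt (B\<^sup>2) < s" unfolding s_def using a b by (intro real_sqrt_less_mono) simp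
  then have r_pos: "r > 0" unfolding r_def using a B by simp
  have root: "a * r\<^sup>2 + B * r - b = 0"
  proof -
    have "a * r\<^sup>2 + B * r - b = (s\<^sup>2 - B\<^sup>2 - 4 * a * b) / (4 * a)"
      unfolding r_def using a by (simp add: field_simps power2_eq_square)
    then show ?thesis using s2 by simp
  qed
  have "\<theta> \<le> r" if "a * \<theta>\<^sup>2 + B * \<theta> - b = 0" for \<theta>
  proof (rule ccontr)
    assume "\<not> \<theta> \<le> r"
    then have "(\<theta> - r) * (a * (\<theta> + r) + B) > 0" using a B r_pos by (intro mult_pos_pos) (auto intro: add_pos_pos)
    moreover have "(\<theta> - r) * (a * (\<theta> + r) + B) = (a * \<theta>\<^sup>2 + B * \<theta> - b) - (a * r\<^sup>2 + B * r - b)"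
      by (simp add: power2_eq_square algebra_simps)
    ultimately show False using that root by simp
  qed
  then have "(GREATEST \<theta>::real. a * \<theta>\<^sup>2 + B * \<theta> - b = 0) = r"
    using root by (intro Greatest_equality) auto
  then show ?thesis using r_pos by simp
qed

lemma theta_next_bounds:
  assumes \<Gamma>: "\<Gamma> > 0" and Lb: "Lb > 0" and \<mu>: "\<mu> \<ge> 0" and p: "0 < p" "p \<le> 1"
    and pos: "\<alpha> > 0" "\<tau> > 0" "\<beta> > 0"
  shows "0 < theta_next Lb \<mu> p \<Gamma> (theta_min \<alpha> \<tau> \<beta> p)"
    and "p * theta_next Lb \<mu> p \<Gamma> (theta_min \<alpha> \<tau> \<beta> p) < 1"
proof -
  define \<theta> where "\<theta> = theta_next Lb \<mu> p \<Gamma> (theta_min \<alpha> \<tau> \<beta> p)"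
  have "0 < Lb + \<Gamma> * \<mu>" using \<Gamma> Lb \<mu> by (simp add: add_pos_nonneg)
  then have "(GREATEST \<theta>::real. p * Lb * \<Gamma> * \<theta>\<^sup>2 + p * (Lb + \<Gamma> * \<mu>) * \<theta> - (Lb + \<Gamma> * \<mu>) = 0) > 0"
    using \<Gamma> Lb p by (intro Greatest_quadratic_root_pos) auto
  moreover have "0 < theta_min \<alpha> \<tau> \<beta> p" "theta_min \<alpha> \<tau> \<beta> p \<le> 1 / 4"
    using pos p unfolding theta_min_def by auto
  ultimately have "0 < \<theta>" "\<theta> \<le> 1 / 4" unfolding \<theta>_def theta_next_def by auto
  then show "0 < \<theta>" "p * \<theta> < 1" using p mult_mono[of p 1 \<theta> "1 / 4"] by auto
qed

lemma Gam_alg_step: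
  "Gam (fst (alg_step n gf CDy CDz CP Lb \<mu> p \<tau> \<beta> \<alpha> s \<xi>))
    = Gam s + p * \<theta> * Gam s / (1 - p * \<theta>)"
  if "\<theta> = theta_next Lb \<mu> p (Gam s) (theta_min \<alpha> \<tau> \<beta> p)"
  unfolding alg_step_def Let_def that by (simp split: prod.split)

lemma Gam_alg_run_ge:
  assumes \<Gamma>: "Gam s0 > 0" and Lb: "Lb > 0" and \<mu>: "\<mu> \<ge> 0" and p: "0 < p" "p \<le> 1"
    and pos: "\<alpha> > 0" "\<tau> > 0" "\<beta> > 0"
  shows "Gam (alg_run n gf CDy CDz CP Lb \<mu> p \<tau> \<beta> \<alpha> s0 \<Xi> t) \<ge> Gam s0"
proof (induction t)
  case 0
  then show ?case by simp
next
  case (Suc t)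
  define s where "s = alg_run n gf CDy CDz CP Lb \<mu> p \<tau> \<beta> \<alpha> s0 \<Xi> t"
  define \<theta> where "\<theta> = theta_next Lb \<mu> p (Gam s) (theta_min \<alpha> \<tau> \<beta> p)"
  have "Gam s \<ge> Gam s0" using Suc.IH unfolding s_def .
  moreover have "0 < \<theta>" "p * \<theta> < 1"
    unfolding \<theta>_def using theta_next_bounds[OF _ Lb \<mu> p pos] \<Gamma> \<open>Gam s \<ge> Gam s0\<close> by auto
  ultimately have "0 \<le> p * \<theta> * Gam s / (1 - p * \<theta>)" using p \<Gamma> by simp
  moreover have "alg_run n gf CDy CDz CP Lb \<mu> p \<tau> \<beta> \<alpha> s0 \<Xi> (Suc t)
      = fst (alg_step n gf CDy CDz CP Lb \<mu> p \<tau> \<beta> \<alpha> s (\<Xi> t))"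
    unfolding s_def by simp
  ultimately show ?case
    using \<open>Gam s \<ge> Gam s0\<close> Gam_alg_step[OF \<theta>_def, of n gf CDy CDz CP "\<Xi> t"] by simp
qed

lemma arg_min_quadratic:
  fixes g u y :: "'a::real_inner"
  assumes c: "c > 0" and \<mu>: "\<mu> \<ge> 0"
  shows "(ARG_MIN (\<lambda>x. g \<bullet> x + c * (norm (x - u))\<^sup>2 + \<mu> / 2 * (norm (x - y))\<^sup>2) x. True)
         = (1 / (2 * c + \<mu>)) *\<^sub>R ((2 * c) *\<^sub>R u + \<mu> *\<^sub>R y - g)"
proof -
  define \<phi> where "\<phi> x = g \<bullet> x + c * (norm (x - u))\<^sup>2 + \<mu> / 2 * (norm (x - y))\<^sup>2" for x
  define k where "k = 2 * c + \<mu>"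
  define v where "v = (2 * c) *\<^sub>R u + \<mu> *\<^sub>R y - g"
  define m where "m = (1 / k) *\<^sub>R v"
  have k: "k > 0" unfolding k_def using c \<mu> by simp
  have km: "k *\<^sub>R m = v" unfolding m_def using k by simp
  have square: "\<phi> x = k / 2 * (norm (x - m))\<^sup>2 + (c * (u \<bullet> u) + \<mu> / 2 * (y \<bullet> y) - k / 2 * (m \<bullet> m))"
    for x
  proof -
    have "\<phi> x = k / 2 * (x \<bullet> x) - x \<bullet> v + c * (u \<bullet> u) + \<mu> / 2 * (y \<bullet> y)"
      unfolding \<phi>_def v_def k_def
      by (simp add: power2_norm_eq_inner inner_commute algebra_simps)
    moreover have "k / 2 * (norm (x - m))\<^sup>2 = k / 2 * (x \<bullet> x) - x \<bullet> (k *\<^sub>R m) + k / 2 * (m \<bullet> m)"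
      by (simp add: power2_norm_eq_inner inner_commute algebra_simps)
    ultimately show ?thesis unfolding km by (simp add: field_simps)
  qed
  have "is_arg_min \<phi> (\<lambda>x. True) m"
    unfolding is_arg_min_def using square k by (auto simp: not_less)
  moreover have "z = m" if "is_arg_min \<phi> (\<lambda>x. True) z" for z
  proof -
    from that have "\<not> \<phi> m < \<phi> z" unfolding is_arg_min_def by blast
    then have "k / 2 * (norm (z - m))\<^sup>2 \<le> 0" using square[of z] square[of m] by simp
    then show ?thesis using k by (simp add: mult_le_0_iff)
  qed
  ultimately have "arg_min \<phi> (\<lambda>x. True) = m"
    unfolding arg_min_def by (rule someI2)
  then show ?thesis unfolding \<phi>_def m_def v_def k_def by simp
qed

section \<open>Compressors and product measures\<close>

lemma integrable_norm_sq_add: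
  fixes f g :: "'b \<Rightarrow> 'c::euclidean_space"
  assumes [measurable]: "f \<in> borel_measurable M" "g \<in> borel_measurable M"
    and "integrable M (\<lambda>x. (norm (f x))\<^sup>2)" "integrable M (\<lambda>x. (norm (g x))\<^sup>2)"
  shows "integrable M (\<lambda>x. (norm (f x + g x))\<^sup>2)"
proof (rule Bochner_Integration.integrable_bound)
  show "integrable M (\<lambda>x. 2 * (norm (f x))\<^sup>2 + 2 * (norm (g x))\<^sup>2)"
    using assms(3,4) by (intro Bochner_Integration.integrable_add integrable_mult_right)
  show "AE x in M. norm ((norm (f x + g x))\<^sup>2) \<le> norm (2 * (norm (f x))\<^sup>2 + 2 * (norm (g x))\<^sup>2)"
    using norm_add_sq_le[of 1 "f _" "g _"] by (intro AE_I2) simp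
qed measurable

lemma integrable_norm_sq_sum:
  fixes f :: "'i \<Rightarrow> 'b \<Rightarrow> 'c::euclidean_space"
  assumes "finite I" "\<And>i. i \<in> I \<Longrightarrow> f i \<in> borel_measurable M"
    "\<And>i. i \<in> I \<Longrightarrow> integrable M (\<lambda>x. (norm (f i x))\<^sup>2)"
  shows "integrable M (\<lambda>x. (norm (\<Sum>i\<in>I. f i x))\<^sup>2)"
  using assms
proof (induction I rule: finite_induct)
  case (insert j I)
  have "(\<lambda>x. \<Sum>i\<in>I. f i x) \<in> borel_measurable M" using insert by (intro borel_measurable_sum) auto
  with insert show ?case
    by (simp only: sum.insert[OF insert(1,2)]) (intro integrable_norm_sq_add, auto)
qed simp

lemma integral_PiM_component:
  fixes f :: "'b \<Rightarrow> 'c::{banach, second_countable_topology}"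
  assumes "\<And>i. i \<in> I \<Longrightarrow> prob_space (M i)" and i: "i \<in> I" and f: "f \<in> borel_measurable (M i)"
  shows "(\<integral>\<omega>. f (\<omega> i) \<partial>PiM I M) = (\<integral>x. f x \<partial>M i)"
proof -
  have "(\<lambda>\<omega>. \<omega> i) \<in> measurable (PiM I M) (M i)" using i by measurable
  from integral_distr[OF this f] show ?thesis
    using distr_PiM_component[of I M i, OF assms(1) i] by simp
qed

lemma integrable_PiM_component:
  fixes f :: "'b \<Rightarrow> 'c::{banach, second_countable_topology}"
  assumes "\<And>i. i \<in> I \<Longrightarrow> prob_space (M i)" and i: "i \<in> I" and f: "integrable (M i) f"
  shows "integrable (PiM I M) (\<lambda>\<omega>. f (\<omega> i))"
proof -
  have m: "(\<lambda>\<omega>. \<omega> i) \<in> measurable (PiM I M) (M i)" using i by measurable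
  have "integrable (distr (PiM I M) (M i) (\<lambda>\<omega>. \<omega> i)) f"
    using f distr_PiM_component[of I M i, OF assms(1) i] by simp
  then show ?thesis using integrable_distr_eq[OF m borel_measurable_integrable[OF f]] by simp
qed

text \<open>The junk value of the Bochner integral of a non-measurable function is 0, so the
  measurability hypothesis may be assumed when bounding the nonnegative integral.\<close>
lemma integral_le_if_nn_integral_le:
  fixes f :: "'b \<Rightarrow> real"
  assumes f: "\<And>x. 0 \<le> f x" and r: "0 \<le> r"
    and bound: "f \<in> borel_measurable M \<Longrightarrow> (\<integral>\<^sup>+x. ennreal (f x) \<partial>M) \<le> ennreal r"
  shows "(\<integral>x. f x \<partial>M) \<le> r"
proof (cases "f \<in> borel_measurable M")
  case True
  then have "(\<integral>x. f x \<partial>M) = enn2real (\<integral>\<^sup>+x. ennreal (f x) \<partial>M)"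
    using f by (intro integral_eq_nn_integral) auto
  also have "\<dots> \<le> r" using bound[OF True] r by (simp add: enn2real_leI)
  finally show ?thesis .
next
  case False
  then have "\<not> integrable M f" by auto
  then show ?thesis using r by (simp add: not_integrable_integral_eq)
qed

lemma unbiased_compressor_integrable_norm_sq:
  assumes "unbiased_compressor Q C \<omega>"
  shows "integrable Q (\<lambda>r. (norm (C r x))\<^sup>2)"
proof -
  interpret prob_space Q using assms unfolding unbiased_compressor_def by auto
  have "integrable Q (\<lambda>r. (norm (C r x - x + x))\<^sup>2)"
    using assms unfolding unbiased_compressor_def
    by (intro integrable_norm_sq_add) (auto intro: borel_measurable_integrable)
  then show ?thesis by simp
qed

text \<open>Since E C(e) = e, the cross term vanishes and
  E |\<beta> C(e) - e|^2 = \<beta>^2 E |C(e) - e|^2 + (1 - \<beta>)^2 |e|^2 \<le> (\<beta>^2 (\<omega> + 1) - 2\<beta> + 1) |e|^2.\<close>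
lemma unbiased_compressor_scaled_contractive:
  assumes U: "unbiased_compressor Q C \<omega>" and \<beta>: "0 < \<beta>" "\<beta> \<le> 1 / (\<omega> + 1)"
  shows "contractive_compressor Q (\<lambda>r x. \<beta> *\<^sub>R C r x) \<beta>"
proof -
  have \<omega>: "\<omega> \<ge> 0" and P: "prob_space Q"
    and meas: "(\<lambda>(r, x). C r x) \<in> borel_measurable (Q \<Otimes>\<^sub>M borel)"
    using U unfolding unbiased_compressor_def by auto
  interpret prob_space Q by (rule P)
  have \<beta>\<omega>: "\<beta> * (\<omega> + 1) \<le> 1" using \<beta> \<omega> by (simp add: field_simps)
  have bound: "integrable Q (\<lambda>r. (norm (\<beta> *\<^sub>R C r e - e))\<^sup>2) \<and>
      (\<integral>r. (norm (\<beta> *\<^sub>R C r e - e))\<^sup>2 \<partial>Q) \<le> (1 - \<beta>) * (norm e)\<^sup>2" for e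
  proof -
    have iC: "integrable Q (\<lambda>r. C r e)" and EC: "(\<integral>r. C r e \<partial>Q) = e"
      and iV: "integrable Q (\<lambda>r. (norm (C r e - e))\<^sup>2)"
      and V: "(\<integral>r. (norm (C r e - e))\<^sup>2 \<partial>Q) \<le> \<omega> * (norm e)\<^sup>2"
      using U unfolding unbiased_compressor_def by auto
    have expand: "(norm (\<beta> *\<^sub>R C r e - e))\<^sup>2 = \<beta>\<^sup>2 * (norm (C r e - e))\<^sup>2
        - 2 * \<beta> * (1 - \<beta>) * ((C r e - e) \<bullet> e) + (1 - \<beta>)\<^sup>2 * (norm e)\<^sup>2" for r
    proof -
      have "\<beta> *\<^sub>R C r e - e = \<beta> *\<^sub>R (C r e - e) - (1 - \<beta>) *\<^sub>R e" by (simp add: algebra_simps)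
      then show ?thesis
        by (simp only: power2_norm_eq_inner)
          (simp add: inner_commute power2_eq_square algebra_simps)
    qed
    have iI: "integrable Q (\<lambda>r. (C r e - e) \<bullet> e)" using iC by simp
    have EI: "(\<integral>r. (C r e - e) \<bullet> e \<partial>Q) = 0"
      using iC EC by (simp add: prob_space)
    have int: "integrable Q (\<lambda>r. \<beta>\<^sup>2 * (norm (C r e - e))\<^sup>2 - 2 * \<beta> * (1 - \<beta>) * ((C r e - e) \<bullet> e)
        + (1 - \<beta>)\<^sup>2 * (norm e)\<^sup>2)"
      using iV iI by simp
    have "(\<integral>r. (norm (\<beta> *\<^sub>R C r e - e))\<^sup>2 \<partial>Q)
        = \<beta>\<^sup>2 * (\<integral>r. (norm (C r e - e))\<^sup>2 \<partial>Q) + (1 - \<beta>)\<^sup>2 * (norm e)\<^sup>2"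
      unfolding expand using iV iI EI by (simp add: prob_space)
    also have "\<dots> \<le> \<beta>\<^sup>2 * (\<omega> * (norm e)\<^sup>2) + (1 - \<beta>)\<^sup>2 * (norm e)\<^sup>2"
      using V by (intro add_right_mono mult_left_mono) auto
    also have "\<dots> = (\<beta> * (\<beta> * (\<omega> + 1)) - 2 * \<beta> + 1) * (norm e)\<^sup>2"
      by (simp add: power2_eq_square algebra_simps)
    also have "\<dots> \<le> (1 - \<beta>) * (norm e)\<^sup>2"
    proof (rule mult_right_mono)
      have "\<beta> * (\<beta> * (\<omega> + 1)) \<le> \<beta>" using \<beta>\<omega> \<beta> by (simp add: mult_left_le)
      then show "\<beta> * (\<beta> * (\<omega> + 1)) - 2 * \<beta> + 1 \<le> 1 - \<beta>" by linarith
    qed simp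
    finally show ?thesis using int unfolding expand by simp
  qed
  have "(\<lambda>(r, x). \<beta> *\<^sub>R C r x) \<in> borel_measurable (Q \<Otimes>\<^sub>M borel)"
    using borel_measurable_scaleR[OF borel_measurable_const meas] by (simp add: case_prod_beta')
  moreover have "\<beta> \<le> 1"
  proof -
    have "\<beta> \<le> \<beta> * (\<omega> + 1)" using \<beta> \<omega> by (simp add: algebra_simps)
    then show ?thesis using \<beta>\<omega> by linarith
  qed
  ultimately show ?thesis using \<beta> P bound unfolding contractive_compressor_def by auto
qed

lemma contractive_compressors_mean_sq_norm:
  assumes C: "\<And>i. i < n \<Longrightarrow> contractive_compressor (Q i) (C i) \<alpha>"
  shows "(\<integral>\<^sup>+r. ennreal (mean_sq_norm n (\<lambda>i. C i (r i) (e i) - e i)) \<partial>PiM {..<n} Q)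
    \<le> ennreal ((1 - \<alpha>) * mean_sq_norm n e)"
proof -
  define F where "F i r = (norm (C i r (e i) - e i))\<^sup>2" for i r
  have P: "\<And>i. i \<in> {..<n} \<Longrightarrow> prob_space (Q i)"
    using C unfolding contractive_compressor_def by auto
  have iF: "integrable (PiM {..<n} Q) (\<lambda>r. F i (r i))" if "i \<in> {..<n}" for i
    using C that unfolding F_def contractive_compressor_def
    by (intro integrable_PiM_component[OF P that]) auto
  have "(\<integral>\<^sup>+r. ennreal (mean_sq_norm n (\<lambda>i. C i (r i) (e i) - e i)) \<partial>PiM {..<n} Q)
      = ennreal (\<integral>r. (1 / real n) * (\<Sum>i<n. F i (r i)) \<partial>PiM {..<n} Q)"
    unfolding mean_sq_norm_def F_def[symmetric] using iF
    by (intro nn_integral_eq_integral AE_I2 integrable_mult_right Bochner_Integration.integrable_sum)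
      (auto simp: F_def sum_nonneg)
  also have "(\<integral>r. (1 / real n) * (\<Sum>i<n. F i (r i)) \<partial>PiM {..<n} Q)
      = (1 / real n) * (\<Sum>i<n. \<integral>r. F i (r i) \<partial>PiM {..<n} Q)"
    using iF by (simp add: Bochner_Integration.integral_sum)
  also have "\<dots> = (1 / real n) * (\<Sum>i<n. \<integral>r. F i r \<partial>Q i)"
    using C unfolding F_def contractive_compressor_def
    by (intro arg_cong2[where f = "(*)"] sum.cong refl integral_PiM_component[OF P])
      (auto intro: borel_measurable_integrable)
  also have "\<dots> \<le> (1 / real n) * (\<Sum>i<n. (1 - \<alpha>) * (norm (e i))\<^sup>2)"
    using C unfolding F_def contractive_compressor_def by (intro mult_left_mono sum_mono) auto
  finally show ?thesis by (simp add: mean_sq_norm_def sum_distrib_left ennreal_leI)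
qed

section \<open>Expectation over one iteration\<close>

lemma nn_integral_step_measure_le:
  fixes \<Phi> :: "'r seeds \<Rightarrow> ennreal" and g :: "(nat \<Rightarrow> 'r) \<Rightarrow> bool \<Rightarrow> ennreal"
  assumes Qz_prob: "\<And>i. i < n \<Longrightarrow> prob_space (Qz i)" and QP_prob: "prob_space QP" and p: "0 \<le> p" "p \<le> 1"
    and \<Phi>: "\<Phi> \<in> borel_measurable (step_measure n Qy QP p Qz)"
    and bound: "\<And>ry rP c. (\<integral>\<^sup>+rz. \<Phi> (ry, rP, c, rz) \<partial>PiM {..<n} Qz) \<le> g ry c"
  shows "(\<integral>\<^sup>+\<xi>. \<Phi> \<xi> \<partial>step_measure n Qy QP p Qz)
    \<le> (\<integral>\<^sup>+ry. g ry True * ennreal p + g ry False * ennreal (1 - p) \<partial>PiM {..<n} Qy)"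
proof -
  define B where "B = measure_pmf (bernoulli_pmf p)"
  define R2 where "R2 = B \<Otimes>\<^sub>M PiM {..<n} Qz"
  define R1 where "R1 = QP \<Otimes>\<^sub>M R2"
  have PZ: "prob_space (PiM {..<n} Qz)" using Qz_prob by (intro prob_space_PiM) auto
  have PR2: "prob_space R2" unfolding R2_def B_def using PZ by (intro prob_space_pair prob_space_measure_pmf)
  have PR1: "prob_space R1" unfolding R1_def using QP_prob PR2 by (rule prob_space_pair)
  have \<Phi>_meas: "\<Phi> \<in> borel_measurable (PiM {..<n} Qy \<Otimes>\<^sub>M R1)"
    using \<Phi> unfolding step_measure_def R1_def R2_def B_def .
  have "(\<integral>\<^sup>+r1. \<Phi> (ry, r1) \<partial>R1) \<le> g ry True * ennreal p + g ry False * ennreal (1 - p)"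
    if ry: "ry \<in> space (PiM {..<n} Qy)" for ry
  proof -
    have \<Phi>_ry: "(\<lambda>r1. \<Phi> (ry, r1)) \<in> borel_measurable (QP \<Otimes>\<^sub>M R2)"
      using measurable_Pair2[OF \<Phi>_meas ry] unfolding R1_def .
    have "(\<integral>\<^sup>+r2. \<Phi> (ry, rP, r2) \<partial>R2) \<le> g ry True * ennreal p + g ry False * ennreal (1 - p)"
      if rP: "rP \<in> space QP" for rP
    proof -
      have "(\<lambda>r2. \<Phi> (ry, rP, r2)) \<in> borel_measurable (B \<Otimes>\<^sub>M PiM {..<n} Qz)"
        using measurable_Pair2[OF \<Phi>_ry rP] unfolding R2_def .
      from sigma_finite_measure.nn_integral_fst[OF prob_space_imp_sigma_finite[OF PZ] this]
      have "(\<integral>\<^sup>+r2. \<Phi> (ry, rP, r2) \<partial>R2) = (\<integral>\<^sup>+c. \<integral>\<^sup>+rz. \<Phi> (ry, rP, c, rz) \<partial>PiM {..<n} Qz \<partial>B)"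
        unfolding R2_def by simp
      also have "\<dots> \<le> (\<integral>\<^sup>+c. g ry c \<partial>B)" by (intro nn_integral_mono bound)
      also have "\<dots> = g ry True * ennreal p + g ry False * ennreal (1 - p)"
        unfolding B_def using p by simp
      finally show ?thesis .
    qed
    then have "(\<integral>\<^sup>+rP. \<integral>\<^sup>+r2. \<Phi> (ry, rP, r2) \<partial>R2 \<partial>QP)
        \<le> (\<integral>\<^sup>+rP. g ry True * ennreal p + g ry False * ennreal (1 - p) \<partial>QP)"
      by (intro nn_integral_mono)
    moreover have "(\<integral>\<^sup>+r1. \<Phi> (ry, r1) \<partial>R1) = (\<integral>\<^sup>+rP. \<integral>\<^sup>+r2. \<Phi> (ry, rP, r2) \<partial>R2 \<partial>QP)"
      unfolding R1_def using sigma_finite_measure.nn_integral_fst[OF prob_space_imp_sigma_finite[OF PR2] \<Phi>_ry]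
      by simp
    ultimately show ?thesis using prob_space.emeasure_space_1[OF QP_prob] by simp
  qed
  then have "(\<integral>\<^sup>+ry. \<integral>\<^sup>+r1. \<Phi> (ry, r1) \<partial>R1 \<partial>PiM {..<n} Qy)
      \<le> (\<integral>\<^sup>+ry. g ry True * ennreal p + g ry False * ennreal (1 - p) \<partial>PiM {..<n} Qy)"
    by (intro nn_integral_mono)
  moreover have "(\<integral>\<^sup>+\<xi>. \<Phi> \<xi> \<partial>step_measure n Qy QP p Qz) = (\<integral>\<^sup>+ry. \<integral>\<^sup>+r1. \<Phi> (ry, r1) \<partial>R1 \<partial>PiM {..<n} Qy)"
    unfolding step_measure_def R1_def[symmetric] R2_def[symmetric] B_def[symmetric]
    using sigma_finite_measure.nn_integral_fst[OF prob_space_imp_sigma_finite[OF PR1] \<Phi>_meas]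
    by (simp add: R1_def R2_def B_def)
  ultimately show ?thesis by simp
qed

lemma integral_step_measure_fst:
  fixes h :: "(nat \<Rightarrow> 'r) \<Rightarrow> real"
  assumes Qz_prob: "\<And>i. i < n \<Longrightarrow> prob_space (Qz i)" and QP_prob: "prob_space QP"
    and h: "h \<in> borel_measurable (PiM {..<n} Qy)"
  shows "(\<integral>\<xi>. h (fst \<xi>) \<partial>step_measure n Qy QP p Qz) = (\<integral>ry. h ry \<partial>PiM {..<n} Qy)"
proof -
  have "prob_space (QP \<Otimes>\<^sub>M measure_pmf (bernoulli_pmf p) \<Otimes>\<^sub>M PiM {..<n} Qz)"
    using Qz_prob QP_prob by (intro prob_space_pair prob_space_measure_pmf prob_space_PiM) auto
  moreover have "fst \<in> measurable (step_measure n Qy QP p Qz) (PiM {..<n} Qy)"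
    unfolding step_measure_def by measurable
  ultimately show ?thesis
    using integral_distr[OF _ h] prob_space.distr_pair_fst unfolding step_measure_def by metis
qed

lemma integrable_norm_sq_affine_compressed_sum:
  fixes C :: "nat \<Rightarrow> 'r \<Rightarrow> 'a::euclidean_space \<Rightarrow> 'a"
  assumes C: "\<And>i. i < n \<Longrightarrow> unbiased_compressor (Q i) (C i) \<omega>"
  shows "integrable (PiM {..<n} Q) (\<lambda>r. (norm (a + \<kappa> *\<^sub>R (\<Sum>i<n. C i (r i) (e i))))\<^sup>2)"
proof -
  have P: "\<And>i. i \<in> {..<n} \<Longrightarrow> prob_space (Q i)" using C unfolding unbiased_compressor_def by auto
  interpret prob_space "PiM {..<n} Q" using P by (rule prob_space_PiM)
  have C_meas: "(\<lambda>r. C i (r i) (e i)) \<in> borel_measurable (PiM {..<n} Q)" if i: "i \<in> {..<n}" for i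
  proof -
    have "(\<lambda>r. C i r (e i)) \<in> borel_measurable (Q i)"
      using C i unfolding unbiased_compressor_def by (auto intro: borel_measurable_integrable)
    then show ?thesis using i by measurable
  qed
  have "integrable (PiM {..<n} Q) (\<lambda>r. (norm (C i (r i) (e i)))\<^sup>2)" if "i \<in> {..<n}" for i
    using C that by (intro integrable_PiM_component[OF P] unbiased_compressor_integrable_norm_sq) auto
  then have "integrable (PiM {..<n} Q) (\<lambda>r. \<kappa>\<^sup>2 * (norm (\<Sum>i<n. C i (r i) (e i)))\<^sup>2)"
    using C_meas by (intro integrable_mult_right integrable_norm_sq_sum) auto
  then show ?thesis
    using C_meas by (intro integrable_norm_sq_add) (auto simp: power_mult_distrib)
qed

lemma ennreal_convex_combination:
  assumes "0 \<le> a" "0 \<le> b" "0 \<le> p" "p \<le> 1"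
  shows "ennreal a * ennreal p + ennreal b * ennreal (1 - p) = ennreal (p * a + (1 - p) * b)"
  using assms by (simp add: ennreal_mult mult.commute)

lemma nn_integral_compressed_shift_error_le:
  fixes X :: "(nat \<Rightarrow> 'r) \<Rightarrow> 'a::euclidean_space" and \<Phi> :: "'r seeds \<Rightarrow> real"
  assumes n: "n \<ge> 1" and Cz: "\<And>i. i < n \<Longrightarrow> unbiased_compressor (Qz i) (CDz i) \<omega>"
    and \<beta>: "0 < \<beta>" "\<beta> \<le> 1 / (\<omega> + 1)"
    and QP_prob: "prob_space QP" and p: "0 \<le> p" "p \<le> 1"
    and \<Phi>_meas: "\<Phi> \<in> borel_measurable (step_measure n Qy QP p Qz)"
    and \<Phi>: "\<And>ry rP b rz. \<Phi> (ry, rP, b, rz) = mean_sq_norm n (\<lambda>i.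
      h i + \<beta> *\<^sub>R CDz i (rz i) (gf i (if b then X ry else z) - h i) - gf i (if b then X ry else z))"
  shows "(\<integral>\<^sup>+\<xi>. ennreal (\<Phi> \<xi>) \<partial>step_measure n Qy QP p Qz)
    \<le> (\<integral>\<^sup>+ry. ennreal ((1 - \<beta>) * ((1 - p) * mean_sq_norm n (\<lambda>i. h i - gf i z)
        + p * mean_sq_norm n (\<lambda>i. h i - gf i (X ry)))) \<partial>PiM {..<n} Qy)"
proof -
  define A where "A w = mean_sq_norm n (\<lambda>i. h i - gf i w)" for w
  have Cz_scaled: "contractive_compressor (Qz i) (\<lambda>r x. \<beta> *\<^sub>R CDz i r x) \<beta>" if "i < n" for i
    using unbiased_compressor_scaled_contractive[OF Cz[OF that] \<beta>] .
  then have "\<beta> \<le> 1" using n unfolding contractive_compressor_def by auto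
  then have A_nonneg: "0 \<le> (1 - \<beta>) * A w" for w
    unfolding A_def by (intro mult_nonneg_nonneg mean_sq_norm_nonneg) simp
  have compress: "(\<integral>\<^sup>+rz. ennreal (\<Phi> (ry, rP, b, rz)) \<partial>PiM {..<n} Qz)
      \<le> ennreal ((1 - \<beta>) * A (if b then X ry else z))" for ry rP b
  proof -
    define e where "e i = gf i (if b then X ry else z) - h i" for i
    have "\<Phi> (ry, rP, b, rz) = mean_sq_norm n (\<lambda>i. \<beta> *\<^sub>R CDz i (rz i) (e i) - e i)" for rz
      unfolding \<Phi> e_def by (simp add: algebra_simps)
    then show ?thesis
      using contractive_compressors_mean_sq_norm[OF Cz_scaled, where e = e]
      unfolding A_def e_def mean_sq_norm_minus_commute[of _ h] by simp
  qed
  have "(\<lambda>\<xi>. ennreal (\<Phi> \<xi>)) \<in> borel_measurable (step_measure n Qy QP p Qz)"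
    using \<Phi>_meas by measurable
  moreover have "\<And>i. i < n \<Longrightarrow> prob_space (Qz i)" using Cz unfolding unbiased_compressor_def by auto
  ultimately have "(\<integral>\<^sup>+\<xi>. ennreal (\<Phi> \<xi>) \<partial>step_measure n Qy QP p Qz)
      \<le> (\<integral>\<^sup>+ry. ennreal ((1 - \<beta>) * A (X ry)) * ennreal p
          + ennreal ((1 - \<beta>) * A z) * ennreal (1 - p) \<partial>PiM {..<n} Qy)"
    using nn_integral_step_measure_le[OF _ QP_prob p _ compress] by simp
  also have "\<dots> = (\<integral>\<^sup>+ry. ennreal ((1 - \<beta>) * ((1 - p) * A z + p * A (X ry))) \<partial>PiM {..<n} Qy)"
    by (intro nn_integral_cong, subst ennreal_convex_combination[OF A_nonneg A_nonneg p])
      (simp add: algebra_simps)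
  finally show ?thesis unfolding A_def .
qed

lemma integral_compressed_shift_error_le:
  fixes X :: "(nat \<Rightarrow> 'r) \<Rightarrow> 'a::euclidean_space" and \<Phi> :: "'r seeds \<Rightarrow> real"
  assumes n: "n \<ge> 1" and Cz: "\<And>i. i < n \<Longrightarrow> unbiased_compressor (Qz i) (CDz i) \<omega>"
    and \<beta>: "0 < \<beta>" "\<beta> \<le> 1 / (\<omega> + 1)"
    and Qy_prob: "\<And>i. i < n \<Longrightarrow> prob_space (Qy i)" and QP_prob: "prob_space QP" and p: "0 \<le> p" "p \<le> 1"
    and \<Phi>: "\<And>ry rP b rz. \<Phi> (ry, rP, b, rz) = mean_sq_norm n (\<lambda>i.
      h i + \<beta> *\<^sub>R CDz i (rz i) (gf i (if b then X ry else z) - h i) - gf i (if b then X ry else z))"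
    and X_int: "integrable (PiM {..<n} Qy) (\<lambda>ry. (norm (X ry - y))\<^sup>2)"
    and descent: "\<And>x. (1 - \<beta>) * ((1 - p) * mean_sq_norm n (\<lambda>i. h i - gf i z)
      + p * mean_sq_norm n (\<lambda>i. h i - gf i x)) \<le> R + K * (norm (x - y))\<^sup>2"
    and K: "K \<ge> 0"
  shows "(\<integral>\<xi>. \<Phi> \<xi> \<partial>step_measure n Qy QP p Qz) \<le> R + K * (\<integral>ry. (norm (X ry - y))\<^sup>2 \<partial>PiM {..<n} Qy)"
proof (rule integral_le_if_nn_integral_le)
  interpret PY: prob_space "PiM {..<n} Qy" using Qy_prob by (intro prob_space_PiM) auto
  have "\<beta> \<le> 1"
    using unbiased_compressor_scaled_contractive[OF Cz \<beta>] n unfolding contractive_compressor_def by auto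
  then have "0 \<le> (1 - \<beta>) * ((1 - p) * mean_sq_norm n (\<lambda>i. h i - gf i z)
      + p * mean_sq_norm n (\<lambda>i. h i - gf i y))"
    using p by (intro mult_nonneg_nonneg add_nonneg_nonneg mean_sq_norm_nonneg) auto
  then have R: "0 \<le> R" using descent[of y] by simp
  then show "0 \<le> R + K * (\<integral>ry. (norm (X ry - y))\<^sup>2 \<partial>PiM {..<n} Qy)" using K by simp
  show "0 \<le> \<Phi> \<xi>" for \<xi> by (cases \<xi>) (simp add: \<Phi> mean_sq_norm_nonneg)
  assume "\<Phi> \<in> borel_measurable (step_measure n Qy QP p Qz)"
  from nn_integral_compressed_shift_error_le[OF n Cz \<beta> QP_prob p this \<Phi>]
  have "(\<integral>\<^sup>+\<xi>. ennreal (\<Phi> \<xi>) \<partial>step_measure n Qy QP p Qz)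
      \<le> (\<integral>\<^sup>+ry. ennreal ((1 - \<beta>) * ((1 - p) * mean_sq_norm n (\<lambda>i. h i - gf i z)
        + p * mean_sq_norm n (\<lambda>i. h i - gf i (X ry)))) \<partial>PiM {..<n} Qy)" .
  also have "\<dots> \<le> (\<integral>\<^sup>+ry. ennreal (R + K * (norm (X ry - y))\<^sup>2) \<partial>PiM {..<n} Qy)"
    using descent by (intro nn_integral_mono ennreal_leI)
  also have "\<dots> = ennreal (\<integral>ry. R + K * (norm (X ry - y))\<^sup>2 \<partial>PiM {..<n} Qy)"
    using X_int R K by (intro nn_integral_eq_integral) auto
  also have "(\<integral>ry. R + K * (norm (X ry - y))\<^sup>2 \<partial>PiM {..<n} Qy)
      = R + K * (\<integral>ry. (norm (X ry - y))\<^sup>2 \<partial>PiM {..<n} Qy)"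
    using X_int by (simp add: PY.prob_space)
  finally show "(\<integral>\<^sup>+\<xi>. ennreal (\<Phi> \<xi>) \<partial>step_measure n Qy QP p Qz)
      \<le> ennreal (R + K * (\<integral>ry. (norm (X ry - y))\<^sup>2 \<partial>PiM {..<n} Qy))" .
qed

lemma alg_step_seed_components:
  fixes n gf CDy CDz CP Lb \<mu> p \<tau> \<beta> \<alpha> and s :: "'a::euclidean_space alg_state"
  defines "S \<equiv> alg_step n gf CDy CDz CP Lb \<mu> p \<tau> \<beta> \<alpha> s"
  shows "fst (snd (S (ry, rP, b, rz))) = fst (snd (S (ry, rP', b', rz')))"
    and "zv (fst (S (ry, rP, b, rz))) = (if b then fst (snd (S (ry, rP, b, rz))) else zv s)"
    and "hv (fst (S (ry, rP, b, rz)))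
      = (\<lambda>i. hv s i + \<beta> *\<^sub>R CDz i (rz i) (gf i (zv (fst (S (ry, rP, b, rz)))) - hv s i))"
  unfolding S_def alg_step_def Let_def by simp_all

lemma integrable_alg_step_x_dist:
  fixes CDy :: "nat \<Rightarrow> 'r \<Rightarrow> 'a::euclidean_space \<Rightarrow> 'a" and s :: "'a alg_state"
  assumes Cy: "\<And>i. i < n \<Longrightarrow> unbiased_compressor (Qy i) (CDy i) \<omega>"
    and Gam: "Gam s > 0" and Lb: "Lb > 0" and \<mu>: "\<mu> \<ge> 0" and p: "0 < p" "p \<le> 1"
    and pos: "\<alpha> > 0" "\<tau> > 0" "\<beta> > 0"
  shows "integrable (PiM {..<n} Qy)
    (\<lambda>ry. (norm (fst (snd (alg_step n gf CDy CDz CP Lb \<mu> p \<tau> \<beta> \<alpha> s (ry, rP, b, rz)))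
      - y_next Lb \<mu> p \<tau> \<beta> \<alpha> s))\<^sup>2)"
proof -
  define \<theta> where "\<theta> = theta_next Lb \<mu> p (Gam s) (theta_min \<alpha> \<tau> \<beta> p)"
  define c where "c = (Lb + Gam s * \<mu>) / (2 * (p * \<theta> * Gam s / (1 - p * \<theta>)))"
  define y where "y = y_next Lb \<mu> p \<tau> \<beta> \<alpha> s"
  have "0 < \<theta>" "p * \<theta> < 1" unfolding \<theta>_def using theta_next_bounds[OF Gam Lb \<mu> p pos] .
  then have c: "c > 0" unfolding c_def using Gam Lb \<mu> p by (simp add: add_pos_nonneg)
  define \<kappa> where "\<kappa> = - (\<theta> / (2 * c + \<mu>)) * (1 / real n)"
  define w where "w = (\<theta> / (2 * c + \<mu>)) *\<^sub>R ((2 * c) *\<^sub>R uv s + \<mu> *\<^sub>R y - hbar s) + (1 - \<theta>) *\<^sub>R zv s - y"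
  have "fst (snd (alg_step n gf CDy CDz CP Lb \<mu> p \<tau> \<beta> \<alpha> s (ry, rP, b, rz))) - y
      = w + \<kappa> *\<^sub>R (\<Sum>i<n. CDy i (ry i) (gf i y - hv s i))" for ry
    unfolding alg_step_def Let_def \<theta>_def[symmetric] c_def[symmetric] y_def[symmetric]
      arg_min_quadratic[OF c \<mu>] w_def \<kappa>_def
    by (simp add: algebra_simps)
  then show ?thesis using integrable_norm_sq_affine_compressed_sum[OF Cy] unfolding y_def by simp
qed

lemma alg_step_expected_shift_error_le:
  fixes f :: "nat \<Rightarrow> 'a::euclidean_space \<Rightarrow> real" and gf :: "nat \<Rightarrow> 'a \<Rightarrow> 'a"
    and CDy CDz :: "nat \<Rightarrow> 'r \<Rightarrow> 'a \<Rightarrow> 'a" and s :: "'a alg_state"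
  assumes n_pos: "n \<ge> 1"
    and grad: "\<And>i x. i < n \<Longrightarrow> (f i has_derivative (\<lambda>h. gf i x \<bullet> h)) (at x)"
    and smooth_i: "\<And>i x y. i < n \<Longrightarrow> norm (gf i x - gf i y) \<le> Li i * norm (x - y)"
    and Lhat: "\<And>x y. (1 / real n) * (\<Sum>i<n. (norm (gf i x - gf i y))\<^sup>2) \<le> Lhat\<^sup>2 * (norm (x - y))\<^sup>2"
    and convex_i: "\<And>i. i < n \<Longrightarrow> convex_on UNIV (f i)"
    and \<mu>: "\<mu> \<ge> 0"
    and Cy: "\<And>i. i < n \<Longrightarrow> unbiased_compressor (Qy i) (CDy i) \<omega>"
    and Cz: "\<And>i. i < n \<Longrightarrow> unbiased_compressor (Qz i) (CDz i) \<omega>"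
    and CP: "contractive_compressor QP CP \<alpha>"
    and Lb: "Lb > 0" and p: "0 < p" "p \<le> 1" and \<tau>: "0 < \<tau>"
    and \<beta>: "0 < \<beta>" "\<beta> \<le> 1 / (\<omega> + 1)"
    and Gam: "Gam s > 0"
  defines "S \<equiv> alg_step n gf CDy CDz CP Lb \<mu> p \<tau> \<beta> \<alpha> s"
    and "y \<equiv> y_next Lb \<mu> p \<tau> \<beta> \<alpha> s"
    and "M \<equiv> step_measure n Qy QP p Qz"
  shows "(\<integral>\<xi>. mean_sq_norm n (\<lambda>i. hv (fst (S \<xi>)) i - gf i (zv (fst (S \<xi>)))) \<partial>M)
    \<le> 8 * p * (1 + p / \<beta>) * Max (Li ` {..<n}) * bregman (avg_fun n f) (avg_fun n gf) (zv s) y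
      + 4 * p * (1 + p / \<beta>) * Lhat\<^sup>2 * (\<integral>\<xi>. (norm (fst (snd (S \<xi>)) - y))\<^sup>2 \<partial>M)
      + (1 - \<beta> / 2) * mean_sq_norm n (\<lambda>i. hv s i - gf i (zv s))"
proof -
  define X where "X ry = fst (snd (S (ry, undefined, undefined, undefined)))" for ry
  have x_next: "fst (snd (S (ry, rP, b, rz))) = X ry" for ry rP b rz
    unfolding X_def S_def by (rule alg_step_seed_components(1))
  have shift_error: "mean_sq_norm n (\<lambda>i. hv (fst (S (ry, rP, b, rz))) i - gf i (zv (fst (S (ry, rP, b, rz)))))
      = mean_sq_norm n (\<lambda>i. hv s i + \<beta> *\<^sub>R CDz i (rz i) (gf i (if b then X ry else zv s) - hv s i)
          - gf i (if b then X ry else zv s))" for ry rP b rz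
    unfolding S_def alg_step_seed_components(2,3) x_next[unfolded S_def] ..
  have \<alpha>: "\<alpha> > 0" and QP_prob: "prob_space QP" using CP unfolding contractive_compressor_def by auto
  have Qy_prob: "\<And>i. i < n \<Longrightarrow> prob_space (Qy i)" and Qz_prob: "\<And>i. i < n \<Longrightarrow> prob_space (Qz i)"
    using Cy Cz unfolding unbiased_compressor_def by auto
  have X_int: "integrable (PiM {..<n} Qy) (\<lambda>ry. (norm (X ry - y))\<^sup>2)"
    unfolding X_def S_def y_def by (rule integrable_alg_step_x_dist[OF Cy Gam Lb \<mu> p \<alpha> \<tau> \<beta>(1)])
  have "\<beta> \<le> 1"
    using unbiased_compressor_scaled_contractive[OF Cz \<beta>] n_pos unfolding contractive_compressor_def by auto
  have "(\<integral>\<xi>. mean_sq_norm n (\<lambda>i. hv (fst (S \<xi>)) i - gf i (zv (fst (S \<xi>)))) \<partial>M)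
      \<le> 8 * p * (1 + p / \<beta>) * Max (Li ` {..<n}) * bregman (avg_fun n f) (avg_fun n gf) (zv s) y
        + (1 - \<beta> / 2) * mean_sq_norm n (\<lambda>i. hv s i - gf i (zv s))
        + 4 * p * (1 + p / \<beta>) * Lhat\<^sup>2 * (\<integral>ry. (norm (X ry - y))\<^sup>2 \<partial>PiM {..<n} Qy)"
    unfolding M_def using p \<beta> shift_error_mixture_le[OF grad smooth_i Lhat convex_i \<beta>(1) \<open>\<beta> \<le> 1\<close> p]
    by (intro integral_compressed_shift_error_le[OF n_pos Cz \<beta> Qy_prob QP_prob _ _ shift_error X_int])
      (auto simp: algebra_simps)
  moreover have "(\<integral>\<xi>. (norm (fst (snd (S \<xi>)) - y))\<^sup>2 \<partial>M) = (\<integral>ry. (norm (X ry - y))\<^sup>2 \<partial>PiM {..<n} Qy)"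
  proof -
    have "fst (snd (S \<xi>)) = X (fst \<xi>)" for \<xi> using x_next by (cases \<xi>) auto
    then show ?thesis
      unfolding M_def by (simp add: integral_step_measure_fst[OF Qz_prob QP_prob borel_measurable_integrable[OF X_int]])
  qed
  ultimately show ?thesis by (simp add: algebra_simps)
qed

theorem lemma7:
  fixes n :: nat
    and f :: "nat \<Rightarrow> 'a::euclidean_space \<Rightarrow> real" and gf :: "nat \<Rightarrow> 'a \<Rightarrow> 'a"
    and Li :: "nat \<Rightarrow> real" and Lhat L \<mu> :: real and xstar :: 'a
    and Qy Qz :: "nat \<Rightarrow> 'r measure" and QP :: "'r measure"
    and CDy CDz :: "nat \<Rightarrow> 'r \<Rightarrow> 'a \<Rightarrow> 'a" and CP :: "'r \<Rightarrow> 'a \<Rightarrow> 'a"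
    and \<omega> \<alpha> Lb p \<Gamma>0 \<tau> \<beta> :: real
    and x0 k0 v0 :: 'a and h0 :: "nat \<Rightarrow> 'a"
    and \<Xi> :: "nat \<Rightarrow> 'r seeds" and t :: nat
  assumes n_pos: "n \<ge> 1"
    and grad: "\<And>i x. i < n \<Longrightarrow> (f i has_derivative (\<lambda>h. gf i x \<bullet> h)) (at x)"
    \<comment> \<open>Assumption 1\<close>
    and smooth_i: "\<And>i x y. i < n \<Longrightarrow> norm (gf i x - gf i y) \<le> Li i * norm (x - y)"
    and Lhat_pos: "Lhat > 0"
    and Lhat: "\<And>x y. (1 / real n) * (\<Sum>i<n. (norm (gf i x - gf i y))\<^sup>2) \<le> Lhat\<^sup>2 * (norm (x - y))\<^sup>2"
    \<comment> \<open>Assumption 2\<close>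
    and smooth: "\<And>x y. norm (avg_fun n gf x - avg_fun n gf y) \<le> L * norm (x - y)"
    \<comment> \<open>Assumption 3\<close>
    and convex_i: "\<And>i. i < n \<Longrightarrow> convex_on UNIV (f i)"
    and mu_nonneg: "\<mu> \<ge> 0"
    and strongly: "strongly_convex \<mu> (avg_fun n f)"
    and minimizer: "\<And>x. avg_fun n f xstar \<le> avg_fun n f x"
    \<comment> \<open>compressor classes; Assumption 4 (independence) is encoded by the product measure step_measure\<close>
    and Cy: "\<And>i. i < n \<Longrightarrow> unbiased_compressor (Qy i) (CDy i) \<omega>"
    and Cz: "\<And>i. i < n \<Longrightarrow> unbiased_compressor (Qz i) (CDz i) \<omega>"
    and CPc: "contractive_compressor QP CP \<alpha>"
    \<comment> \<open>parameters\<close>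
    and Lb_pos: "Lb > 0" and p_pos: "0 < p" and p_le: "p \<le> 1" and \<Gamma>0: "\<Gamma>0 \<ge> 1"
    and tau_pos: "0 < \<tau>" and tau_le: "\<tau> \<le> 1"
    and beta_pos: "0 < \<beta>" and beta_le: "\<beta> \<le> 1 / (\<omega> + 1)"
  shows
   "(let s = alg_run n gf CDy CDz CP Lb \<mu> p \<tau> \<beta> \<alpha> (alg_init n \<Gamma>0 x0 h0 k0 v0) \<Xi> t;
         S = alg_step n gf CDy CDz CP Lb \<mu> p \<tau> \<beta> \<alpha> s;
         y = y_next Lb \<mu> p \<tau> \<beta> \<alpha> s;
         M = step_measure n Qy QP p Qz;
         Lmax = Max (Li ` {..<n})
     in (\<integral>\<xi>. (1 / real n) * (\<Sum>i<n. (norm (hv (fst (S \<xi>)) i - gf i (zv (fst (S \<xi>)))))\<^sup>2) \<partial>M)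
        \<le> 8 * p * (1 + p / \<beta>) * Lmax * bregman (avg_fun n f) (avg_fun n gf) (zv s) y
         + 4 * p * (1 + p / \<beta>) * Lhat\<^sup>2 * (\<integral>\<xi>. (norm (fst (snd (S \<xi>)) - y))\<^sup>2 \<partial>M)
         + (1 - \<beta> / 2) * ((1 / real n) * (\<Sum>i<n. (norm (hv s i - gf i (zv s)))\<^sup>2)))"
proof -
  have \<alpha>: "\<alpha> > 0" using CPc unfolding contractive_compressor_def by simp
  have "Gam (alg_init n \<Gamma>0 x0 h0 k0 v0) > 0" using \<Gamma>0 by (simp add: alg_init_def)
  moreover from this
  have "Gam (alg_run n gf CDy CDz CP Lb \<mu> p \<tau> \<beta> \<alpha> (alg_init n \<Gamma>0 x0 h0 k0 v0) \<Xi> t)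
      \<ge> Gam (alg_init n \<Gamma>0 x0 h0 k0 v0)"
    by (rule Gam_alg_run_ge[OF _ Lb_pos mu_nonneg p_pos p_le \<alpha> tau_pos beta_pos])
  ultimately have "Gam (alg_run n gf CDy CDz CP Lb \<mu> p \<tau> \<beta> \<alpha> (alg_init n \<Gamma>0 x0 h0 k0 v0) \<Xi> t) > 0"
    by linarith
  from alg_step_expected_shift_error_le[OF n_pos grad smooth_i Lhat convex_i mu_nonneg Cy Cz CPc
      Lb_pos p_pos p_le tau_pos beta_pos beta_le this]
  show ?thesis by (simp only: Let_def mean_sq_norm_def)
qed

end
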